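(* In the setting below, for all $i,j=1,\dots,N$, every unit vector $v\in\mathbb{R}^d$ and every $n\in\mathbb{N}_0$, $$\langle x_i(t)-x_j(t),v\rangle\le e^{-K(t-\bar t)}\langle x_i(\bar t)-x_j(\bar t),v\rangle+\big(1-e^{-K(t-\bar t)}\big)d(t_{2n})$$ for all $t_{2n+1}\ge t\ge\bar t\ge t_{2n}$.
   Context: Setting: $N\ge2$; $\psi:\mathbb{R}^d\times\mathbb{R}^d\to\mathbb{R}$ positive, bounded, continuous, $K:=\|\psi\|_\infty$; $\{t_n\}_{n\in\mathbb{N}_0}$ increasing, nonnegative, $t_0=0$, $t_n\to\infty$; $\alpha(0)=1$, $\alpha=1$ on $(t_{2n},t_{2n+1})$, $\alpha=-1$ on $[t_{2n+1},t_{2n+2}]$; $\{x_i\}$ solves $x_i'(t)=\frac1{N-1}\sum_{j\ne i}\alpha(t)\psi(x_i(t),x_j(t))(x_j(t)-x_i(t))$, $t>0$, $x_i(0)=x_i^0\in\mathbb{R}^d$ (continuous, $C^1$ on each $(t_n,t_{n+1})$). $d(t):=\max_{i,j}|x_i(t)-x_j(t)|$. Standing assumptions: $t_{2n+2}-t_{2n+1}<\frac{\ln 2}{K}$ for all $n$; $\sum_{p\ge0}\ln\frac{e^{K(t_{2p+2}-t_{2p+1})}}{2-e^{K(t_{2p+2}-t_{2p+1})}}<\infty$; $\sum_{p\ge0}\ln\max\{1-e^{-K(t_{2p+1}-t_{2p})},1-\frac{\psi_0}{K}(1-e^{-K(t_{2p+1}-t_{2p})})\}=-\infty$, with $\psi_0=\min_{|y|,|z|\le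 M^0}\psi(y,z)$, $M^0=e^{K\sum_{p}(t_{2p+2}-t_{2p+1})}\max_i|x_i^0|$. *)

theory Defs
  imports "HOL-Analysis.Analysis"
begin

definition alpha :: "(nat \<Rightarrow> real) \<Rightarrow> real \<Rightarrow> real" where
  "alpha tt t = (if t = 0 then 1
                 else if (\<exists>n. tt (2*n) < t \<and> t < tt (2*n+1)) then 1 else -1)"

definition diam :: "nat \<Rightarrow> (nat \<Rightarrow> real \<Rightarrow> 'a::real_normed_vector) \<Rightarrow> real \<Rightarrow> real" where
  "diam N x t = Max {norm (x i t - x j t) | i j. i < N \<and> j < N}"

end

(* On a positive interval [t_{2n}, t_{2n+1}] the system is a consensus flow whose weights psi lie
   in [0, K]. Projected onto a direction u, an agent attaining max_k <x_k, u> has nonpositive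
   velocity, so this maximum never exceeds its value M at t_{2n}. Consequently every agent satisfies
   <x_i, u>' <= K (M - <x_i, u>), i.e. <x_i, u> - M decays at least like exp (-K (t - tb)).
   Adding these estimates for v and -v, the two maxima at t_{2n} combine into <x_p - x_q, v>,
   which is at most d(t_{2n}). *)

theory Submission
  imports Defs
begin

lemma finite_obtain_maximizer:
  fixes f :: "'i \<Rightarrow> 'b::linorder"
  assumes "finite I" "I \<noteq> {}"
  obtains m where "m \<in> I" "\<And>j. j \<in> I \<Longrightarrow> f j \<le> f m"
proof -
  have "Max (f ` I) \<in> f ` I"
    using assms by simp
  then obtain m where "m \<in> I" "f m = Max (f ` I)"
    by (metis imageE)
  then show thesis
    using that assms by simp
qed

lemma family_below_tilted_bound:
  fixes f :: "'i \<Rightarrow> real \<Rightarrow> real"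
  assumes "finite I"
    and cont: "\<And>j. j \<in> I \<Longrightarrow> continuous_on {a..c} (f j)"
    and deriv_at_max: "\<And>m s. m \<in> I \<Longrightarrow> a < s \<Longrightarrow> s \<le> c \<Longrightarrow> (\<And>j. j \<in> I \<Longrightarrow> f j s \<le> f m s)
        \<Longrightarrow> \<exists>D\<le>0. (f m has_real_derivative D) (at s)"
    and init: "\<And>j. j \<in> I \<Longrightarrow> f j a \<le> M"
    and "e > 0" and "k \<in> I" and "a \<le> t" "t \<le> c"
  shows "f k t < M + e * (1 + t - a)"
proof (rule ccontr)
  (* At the first time s some agent reaches the tilted bound, a maximal agent there has slope
     at most 0 < e, hence lay above the bound just before s. *)
  define bound where "bound s = M + e * (1 + s - a)" for s
  define T where "T = (\<Union>j\<in>I. {s \<in> {a..c}. bound s \<le> f j s})"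
  assume "\<not> f k t < M + e * (1 + t - a)"
  then have "t \<in> T"
    using assms unfolding T_def bound_def by (auto simp: not_less)
  moreover have "compact T"
    unfolding compact_eq_bounded_closed
  proof
    show "bounded T"
      by (rule bounded_subset[OF bounded_closed_interval[of a c]]) (auto simp: T_def)
    show "closed T"
      unfolding T_def bound_def using \<open>finite I\<close>
      by (intro closed_UN ballI continuous_on_closed_Collect_le cont) (auto intro!: continuous_intros)
  qed
  ultimately obtain s where "s \<in> T" and s_least: "\<And>s'. s' \<in> T \<Longrightarrow> s \<le> s'"
    using compact_attains_inf[of T] by blast
  from \<open>s \<in> T\<close> obtain j where j: "j \<in> I" "a \<le> s" "s \<le> c" "bound s \<le> f j s"
    unfolding T_def by auto
  obtain m where "m \<in> I" and m_max: "\<And>i. i \<in> I \<Longrightarrow> f i s \<le> f m s"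
    using finite_obtain_maximizer[OF \<open>finite I\<close>, of "\<lambda>i. f i s"] j(1) by blast
  have above: "bound s \<le> f m s"
    using j(4) m_max[OF j(1)] by linarith
  have "a < s"
    using above init[OF \<open>m \<in> I\<close>] \<open>e > 0\<close> j(2) unfolding bound_def
    by (cases "s = a") auto
  then obtain D where "D \<le> 0" and "(f m has_real_derivative D) (at s)"
    using deriv_at_max[OF \<open>m \<in> I\<close> _ j(3) m_max] by blast
  then have "((\<lambda>r. f m r - bound r) has_real_derivative D - e) (at s)"
    unfolding bound_def by (auto intro!: derivative_eq_intros)
  moreover have "D - e < 0"
    using \<open>D \<le> 0\<close> \<open>e > 0\<close> by simp
  ultimately obtain d where "d > 0" and
    left_larger: "\<And>h. 0 < h \<Longrightarrow> h < d \<Longrightarrow> f m s - bound s < f m (s - h) - bound (s - h)"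
    using DERIV_neg_dec_left by blast
  obtain h where "0 < h" "h < d" "h < s - a"
    using field_lbound_gt_zero[of d "s - a"] \<open>d > 0\<close> \<open>a < s\<close> by auto
  then have "bound (s - h) < f m (s - h)"
    using left_larger above by fastforce
  then have "s - h \<in> T"
    unfolding T_def using \<open>m \<in> I\<close> \<open>0 < h\<close> \<open>h < s - a\<close> j(3) by (auto intro!: bexI[of _ m])
  then show False
    using s_least \<open>0 < h\<close> by fastforce
qed

lemma family_upper_bound_preserved:
  fixes f :: "'i \<Rightarrow> real \<Rightarrow> real"
  assumes "finite I"
    and cont: "\<And>j. j \<in> I \<Longrightarrow> continuous_on {a..b} (f j)"
    and deriv_at_max: "\<And>m s. m \<in> I \<Longrightarrow> a < s \<Longrightarrow> s < b \<Longrightarrow> (\<And>j. j \<in> I \<Longrightarrow> f j s \<le> f m s)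
        \<Longrightarrow> \<exists>D\<le>0. (f m has_real_derivative D) (at s)"
    and init: "\<And>j. j \<in> I \<Longrightarrow> f j a \<le> M"
    and "k \<in> I" and "a \<le> t" "t \<le> b"
  shows "f k t \<le> M"
proof -
  have before_b: "f k s \<le> M" if "a \<le> s" "s < b" for s
  proof (rule field_le_epsilon)
    fix e :: real
    assume "e > 0"
    have "f k s < M + e / (1 + s - a) * (1 + s - a)"
    proof (rule family_below_tilted_bound[of I a s f M "e / (1 + s - a)" k s])
      show "continuous_on {a..s} (f j)" if "j \<in> I" for j
        using continuous_on_subset[OF cont[OF that]] \<open>s < b\<close> by auto
      show "\<exists>D\<le>0. (f m has_real_derivative D) (at r)"
        if "m \<in> I" "a < r" "r \<le> s" "\<And>j. j \<in> I \<Longrightarrow> f j r \<le> f m r" for m r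
        using deriv_at_max that \<open>s < b\<close> by simp
    qed (use assms \<open>e > 0\<close> \<open>a \<le> s\<close> in auto)
    then show "f k s \<le> M + e"
      using \<open>a \<le> s\<close> by simp
  qed
  consider "t < b" | "a < b" "t = b" | "t = a"
    using \<open>a \<le> t\<close> \<open>t \<le> b\<close> by fastforce
  then show ?thesis
  proof cases
    case 2
    have "closed {s \<in> {a..b}. f k s \<le> M}"
      by (intro continuous_on_closed_Collect_le cont \<open>k \<in> I\<close> continuous_on_const) simp
    moreover have "{a..<b} \<subseteq> {s \<in> {a..b}. f k s \<le> M}"
      using before_b by auto
    ultimately have "closure {a..<b} \<subseteq> {s \<in> {a..b}. f k s \<le> M}"
      by (simp add: closure_minimal)
    then show ?thesis
      using 2 by (auto simp: subset_iff)
  qed (use before_b \<open>a \<le> t\<close> init \<open>k \<in> I\<close> in auto)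
qed

lemma has_real_derivative_inner_right_const:
  "(x has_vector_derivative D) F \<Longrightarrow> ((\<lambda>s. inner (x s) v) has_real_derivative inner D v) F"
  using bounded_linear.has_vector_derivative[OF bounded_linear_inner_left, of x D F v]
  by (simp add: has_real_derivative_iff_has_vector_derivative)

lemma consensus_drift_le:
  fixes c w :: "nat \<Rightarrow> real"
  assumes "N \<ge> 2" and "i < N"
    and "\<And>j. j < N \<Longrightarrow> c j \<le> M"
    and "\<And>j. 0 \<le> w j" and "\<And>j. w j \<le> K"
  shows "1 / (real N - 1) * (\<Sum>j\<in>{..<N} - {i}. w j * (c j - c i)) \<le> K * (M - c i)"
proof -
  have "(\<Sum>j\<in>{..<N} - {i}. w j * (c j - c i)) \<le> (\<Sum>j\<in>{..<N} - {i}. K * (M - c i))"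
  proof (rule sum_mono)
    fix j
    assume "j \<in> {..<N} - {i}"
    then have "w j * (c j - c i) \<le> w j * (M - c i)"
      using assms(3,4) by (simp add: mult_left_mono)
    also have "\<dots> \<le> K * (M - c i)"
      using assms by (simp add: mult_right_mono)
    finally show "w j * (c j - c i) \<le> K * (M - c i)" .
  qed
  also have "\<dots> = (real N - 1) * (K * (M - c i))"
    using assms(1,2) by (simp add: card_Diff_singleton of_nat_diff)
  finally show ?thesis
    using assms(1) by (simp add: field_simps)
qed

lemma norm_diff_le_diam:
  assumes "i < N" "j < N"
  shows "norm (x i t - x j t) \<le> diam N x t"
proof -
  have "{norm (x i t - x j t) | i j. i < N \<and> j < N} = (\<lambda>(i, j). norm (x i t - x j t)) ` ({..<N} \<times> {..<N})"
    by auto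
  then show ?thesis
    unfolding diam_def using assms by (intro Max_ge) auto
qed

lemma inner_diff_le_diam:
  fixes x :: "nat \<Rightarrow> real \<Rightarrow> 'a::real_inner"
  assumes "i < N" "j < N" "norm v \<le> 1"
  shows "inner (x i t - x j t) v \<le> diam N x t"
proof -
  have "inner (x i t - x j t) v \<le> norm (x i t - x j t) * norm v"
    by (rule norm_cauchy_schwarz)
  also have "\<dots> \<le> norm (x i t - x j t)"
    using assms(3) by (simp add: mult_left_le)
  also have "\<dots> \<le> diam N x t"
    using assms(1,2) by (rule norm_diff_le_diam)
  finally show ?thesis .
qed

locale consensus_flow =
  fixes N :: nat
    and w :: "nat \<Rightarrow> nat \<Rightarrow> real \<Rightarrow> real"
    and x :: "nat \<Rightarrow> real \<Rightarrow> 'a::real_inner"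
    and a b :: real
  assumes at_least_two: "N \<ge> 2"
    and weights_nonneg: "\<And>k j s. 0 \<le> w k j s"
    and continuous: "\<And>k. k < N \<Longrightarrow> continuous_on {a..b} (x k)"
    and flow: "\<And>k s. k < N \<Longrightarrow> a < s \<Longrightarrow> s < b \<Longrightarrow>
        (x k has_vector_derivative
          (1 / (real N - 1)) *\<^sub>R (\<Sum>j\<in>{..<N} - {k}. w k j s *\<^sub>R (x j s - x k s))) (at s)"
begin

lemma inner_has_real_derivative:
  assumes "k < N" "a < s" "s < b"
  shows "((\<lambda>r. inner (x k r) u) has_real_derivative
      1 / (real N - 1) * (\<Sum>j\<in>{..<N} - {k}. w k j s * (inner (x j s) u - inner (x k s) u))) (at s)"
  using has_real_derivative_inner_right_const[OF flow[OF assms], of u]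
  by (simp add: inner_sum_left inner_diff_left)

lemma inner_upper_bound_preserved:
  assumes "\<And>j. j < N \<Longrightarrow> inner (x j a) u \<le> M"
    and "k < N" "a \<le> t" "t \<le> b"
  shows "inner (x k t) u \<le> M"
proof (rule family_upper_bound_preserved[of "{..<N}" a b "\<lambda>k s. inner (x k s) u"])
  show "continuous_on {a..b} (\<lambda>s. inner (x j s) u)" if "j \<in> {..<N}" for j
    using continuous[of j] that by (auto intro: continuous_intros)
  show "\<exists>D\<le>0. ((\<lambda>s. inner (x m s) u) has_real_derivative D) (at s)"
    if "m \<in> {..<N}" "a < s" "s < b" "\<And>j. j \<in> {..<N} \<Longrightarrow> inner (x j s) u \<le> inner (x m s) u"
    for m s
  proof (intro exI conjI)
    have "(\<Sum>j\<in>{..<N} - {m}. w m j s * (inner (x j s) u - inner (x m s) u)) \<le> 0"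
      using that(4) by (intro sum_nonpos mult_nonneg_nonpos) (auto simp: weights_nonneg)
    then show "1 / (real N - 1) * (\<Sum>j\<in>{..<N} - {m}. w m j s * (inner (x j s) u - inner (x m s) u)) \<le> 0"
      using at_least_two by (simp add: divide_nonpos_pos)
  qed (use inner_has_real_derivative that in auto)
qed (use assms in auto)

lemma inner_decay_to_upper_bound:
  assumes weights_le: "\<And>k j s. w k j s \<le> K"
    and init: "\<And>j. j < N \<Longrightarrow> inner (x j a) u \<le> M"
    and "i < N" "a \<le> tb" "tb \<le> t" "t \<le> b"
  shows "inner (x i t) u - M \<le> exp (- K * (t - tb)) * (inner (x i tb) u - M)"
proof -
  define g where "g s = exp (K * (s - tb)) * (inner (x i s) u - M)" for s
  have "g t \<le> g tb"
  proof (rule DERIV_nonpos_imp_decreasing_open[of tb t g])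
    show "tb \<le> t"
      by fact
    show "continuous_on {tb..t} g"
      unfolding g_def using continuous_on_subset[OF continuous[OF \<open>i < N\<close>], of "{tb..t}"] assms
      by (auto intro!: continuous_intros)
  next
    fix s
    assume "tb < s" "s < t"
    then have s: "a < s" "s < b"
      using assms by auto
    define drift where
      "drift = 1 / (real N - 1) * (\<Sum>j\<in>{..<N} - {i}. w i j s * (inner (x j s) u - inner (x i s) u))"
    have "(g has_real_derivative exp (K * (s - tb)) * (K * (inner (x i s) u - M) + drift)) (at s)"
      unfolding g_def drift_def
      by (auto intro!: derivative_eq_intros inner_has_real_derivative[OF \<open>i < N\<close> s] simp: algebra_simps)
    moreover have "drift \<le> K * (M - inner (x i s) u)"
      unfolding drift_def using s
      by (intro consensus_drift_le at_least_two \<open>i < N\<close> weights_nonneg weights_le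
          inner_upper_bound_preserved[OF init]) auto
    then have "exp (K * (s - tb)) * (K * (inner (x i s) u - M) + drift) \<le> 0"
      by (intro mult_nonneg_nonpos) (auto simp: algebra_simps)
    ultimately show "\<exists>y. (g has_real_derivative y) (at s) \<and> y \<le> 0"
      by blast
  qed
  then have "exp (K * (t - tb)) * (inner (x i t) u - M) \<le> inner (x i tb) u - M"
    by (simp add: g_def)
  then have "exp (- K * (t - tb)) * (exp (K * (t - tb)) * (inner (x i t) u - M))
      \<le> exp (- K * (t - tb)) * (inner (x i tb) u - M)"
    by (intro mult_left_mono) auto
  then show ?thesis
    by (simp add: mult.assoc[symmetric] exp_add[symmetric])
qed

lemma inner_diff_decay:
  assumes weights_le: "\<And>k j s. w k j s \<le> K"
    and "i < N" "j < N" "norm v \<le> 1" "a \<le> tb" "tb \<le> t" "t \<le> b"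
  shows "inner (x i t - x j t) v
      \<le> exp (- K * (t - tb)) * inner (x i tb - x j tb) v + (1 - exp (- K * (t - tb))) * diam N x a"
proof -
  define E where "E = exp (- K * (t - tb))"
  have "0 \<le> K"
    using weights_nonneg[of 0 0 0] weights_le[of 0 0 0] by linarith
  then have "E \<le> 1"
    unfolding E_def using \<open>tb \<le> t\<close> by simp
  have "{..<N} \<noteq> {}"
    using \<open>i < N\<close> by auto
  obtain p where "p < N" and p_max: "\<And>k. k < N \<Longrightarrow> inner (x k a) v \<le> inner (x p a) v"
    using finite_obtain_maximizer[OF finite_lessThan \<open>{..<N} \<noteq> {}\<close>, of "\<lambda>k. inner (x k a) v"]
    by auto
  obtain q where "q < N" and q_max: "\<And>k. k < N \<Longrightarrow> inner (x k a) (- v) \<le> inner (x q a) (- v)"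
    using finite_obtain_maximizer[OF finite_lessThan \<open>{..<N} \<noteq> {}\<close>, of "\<lambda>k. inner (x k a) (- v)"]
    by auto
  have "inner (x i t) v - inner (x p a) v \<le> E * (inner (x i tb) v - inner (x p a) v)"
    unfolding E_def using assms p_max by (intro inner_decay_to_upper_bound) auto
  moreover have "inner (x j t) (- v) - inner (x q a) (- v) \<le> E * (inner (x j tb) (- v) - inner (x q a) (- v))"
    unfolding E_def using assms q_max by (intro inner_decay_to_upper_bound) auto
  ultimately have "inner (x i t - x j t) v \<le> E * inner (x i tb - x j tb) v + (1 - E) * inner (x p a - x q a) v"
    by (simp add: inner_diff_left algebra_simps)
  also have "\<dots> \<le> E * inner (x i tb - x j tb) v + (1 - E) * diam N x a"
    using \<open>E \<le> 1\<close> \<open>p < N\<close> \<open>q < N\<close> \<open>norm v \<le> 1\<close>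
    by (intro add_left_mono mult_left_mono inner_diff_le_diam) auto
  finally show ?thesis
    unfolding E_def .
qed

end

theorem proposition3p10:
  fixes N :: nat
    and psi :: "'a::euclidean_space \<Rightarrow> 'a \<Rightarrow> real"
    and tt :: "nat \<Rightarrow> real"
    and x :: "nat \<Rightarrow> real \<Rightarrow> 'a"
    and K :: real
  assumes N2: "N \<ge> 2"
    and psi_pos: "\<And>y z. psi y z > 0"
    and psi_bdd: "bounded (range (\<lambda>(y, z). psi y z))"
    and psi_cont: "continuous_on UNIV (\<lambda>(y, z). psi y z)"
    and K_def: "K = (SUP p. \<bar>psi (fst p) (snd p)\<bar>)"
    and tt_mono: "strict_mono tt"
    and tt0: "tt 0 = 0"
    and tt_lim: "filterlim tt at_top sequentially"
    and x_cont: "\<And>i. i < N \<Longrightarrow> continuous_on {0..} (x i)"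
    and x_ode: "\<And>i n t. i < N \<Longrightarrow> tt n < t \<Longrightarrow> t < tt (Suc n) \<Longrightarrow>
        (x i has_vector_derivative
          (1 / (real N - 1)) *\<^sub>R
            (\<Sum>j\<in>{..<N} - {i}. (alpha tt t * psi (x i t) (x j t)) *\<^sub>R (x j t - x i t))) (at t)"
    and short_neg: "\<And>n. tt (2*n+2) - tt (2*n+1) < ln 2 / K"
    and sum_neg: "summable (\<lambda>p. ln (exp (K * (tt (2*p+2) - tt (2*p+1)))
                                   / (2 - exp (K * (tt (2*p+2) - tt (2*p+1))))))"
    and sum_pos: "filterlim (\<lambda>m. \<Sum>p<m. ln (max (1 - exp (- K * (tt (2*p+1) - tt (2*p))))
                     (1 - Inf {psi y z | y z.
                               norm y \<le> exp (K * (\<Sum>q. tt (2*q+2) - tt (2*q+1))) * (MAX i\<in>{..<N}. norm (x i 0))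
                             \<and> norm z \<le> exp (K * (\<Sum>q. tt (2*q+2) - tt (2*q+1))) * (MAX i\<in>{..<N}. norm (x i 0))} / K
                          * (1 - exp (- K * (tt (2*p+1) - tt (2*p)))))))
           at_bot sequentially"
  shows "\<forall>i<N. \<forall>j<N. \<forall>v::'a. norm v = 1 \<longrightarrow> (\<forall>n t tb. tt (2*n) \<le> tb \<and> tb \<le> t \<and> t \<le> tt (2*n+1) \<longrightarrow>
           inner (x i t - x j t) v
             \<le> exp (- K * (t - tb)) * inner (x i tb - x j tb) v
                + (1 - exp (- K * (t - tb))) * diam N x (tt (2*n)))"
proof (intro allI impI)
  fix i j n t tb and v :: 'a
  assume "i < N" "j < N" "norm v = 1" and times: "tt (2*n) \<le> tb \<and> tb \<le> t \<and> t \<le> tt (2*n+1)"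
  obtain B where "\<And>p. \<bar>psi (fst p) (snd p)\<bar> \<le> B"
    using psi_bdd unfolding bounded_iff by (auto simp: case_prod_beta)
  then have psi_le_K: "psi y z \<le> K" for y z
    using cSUP_upper[of "(y, z)" UNIV "\<lambda>p. \<bar>psi (fst p) (snd p)\<bar>"] unfolding K_def
    by (force intro: bdd_aboveI)
  have "0 \<le> tt (2*n)"
    using tt0 tt_mono by (metis strict_mono_less_eq zero_le)
  have alpha_one: "alpha tt s = 1" if "tt (2*n) < s" "s < tt (2*n+1)" for s
    unfolding alpha_def using that by auto
  interpret consensus_flow N "\<lambda>k j s. psi (x k s) (x j s)" x "tt (2*n)" "tt (2*n+1)"
  proof
    show "continuous_on {tt (2*n)..tt (2*n+1)} (x k)" if "k < N" for k
      using continuous_on_subset[OF x_cont[OF that]] \<open>0 \<le> tt (2*n)\<close> by auto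
    show "(x k has_vector_derivative (1 / (real N - 1)) *\<^sub>R
        (\<Sum>j\<in>{..<N} - {k}. psi (x k s) (x j s) *\<^sub>R (x j s - x k s))) (at s)"
      if "k < N" "tt (2*n) < s" "s < tt (2*n+1)" for k s
      using x_ode[of k "2*n" s] that alpha_one[OF that(2,3)] by simp
  qed (use N2 psi_pos less_imp_le in auto)
  show "inner (x i t - x j t) v
      \<le> exp (- K * (t - tb)) * inner (x i tb - x j tb) v + (1 - exp (- K * (t - tb))) * diam N x (tt (2*n))"
    using times \<open>i < N\<close> \<open>j < N\<close> \<open>norm v = 1\<close> by (intro inner_diff_decay psi_le_K) auto
qed

end
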